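(* Let $p$ be a prime and let $(G,H,T)$ be an RCC loop folder of order $p$ with $\langle T\rangle=G$. Then $G$ is abelian.
   Context: A loop folder is a triple $(G,H,T)$ with $G$ a finite group, $H\le G$, and $T\subseteq G$ with $1\in T$ such that $T$ is a set of representatives for the right cosets $H^g\backslash G$ for every $g\in G$. It is an RCC loop folder if moreover $T$ is invariant under conjugation by $G$. Its order is $|T|$. *)

theory Defs
  imports "HOL-Algebra.Algebra"
begin

definition conj_set :: "('a, 'b) monoid_scheme \<Rightarrow> 'a set \<Rightarrow> 'a \<Rightarrow> 'a set" where
  "conj_set G H g = (\<lambda>h. inv\<^bsub>G\<^esub> g \<otimes>\<^bsub>G\<^esub> h \<otimes>\<^bsub>G\<^esub> g) ` H"

definition right_transversal :: "('a, 'b) monoid_scheme \<Rightarrow> 'a set \<Rightarrow> 'a set \<Rightarrow> bool" where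
  "right_transversal G K T \<longleftrightarrow> T \<subseteq> carrier G \<and>
     (\<forall>C \<in> rcosets\<^bsub>G\<^esub> K. card (C \<inter> T) = 1)"

definition loop_folder :: "('a, 'b) monoid_scheme \<Rightarrow> 'a set \<Rightarrow> 'a set \<Rightarrow> bool" where
  "loop_folder G H T \<longleftrightarrow> group G \<and> finite (carrier G) \<and> subgroup H G \<and>
     T \<subseteq> carrier G \<and> \<one>\<^bsub>G\<^esub> \<in> T \<and>
     (\<forall>g \<in> carrier G. right_transversal G (conj_set G H g) T)"

definition RCC_loop_folder :: "('a, 'b) monoid_scheme \<Rightarrow> 'a set \<Rightarrow> 'a set \<Rightarrow> bool" where
  "RCC_loop_folder G H T \<longleftrightarrow> loop_folder G H T \<and>
     (\<forall>g \<in> carrier G. \<forall>t \<in> T. inv\<^bsub>G\<^esub> g \<otimes>\<^bsub>G\<^esub> t \<otimes>\<^bsub>G\<^esub> g \<in> T)"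

end

theory Submission
  imports Defs
begin

text \<open>
  Let G act on the p right cosets of H, let Q be the induced permutation group and S the
  image of T. Then S is a conjugation-closed set of p permutations containing 1, sending the
  coset H to every coset, whose nontrivial members are fixed-point-free. Each such u has
  order p: its conjugacy class lies in S - {1}, so p divides the order of its centralizer,
  which therefore contains an element c of order p; c acts as a p-cycle, whose centralizer
  is generated by c. It follows that a nontrivial element of Q fixes at most one point, and
  counting the elements with a fixed point leaves room for at most p - 1 fixed-point-free
  ones. Hence S - {1} consists of exactly these, and so do the nontrivial powers of any
  u in S - {1}: S is commutative. Since T is a conjugation-invariant transversal, commuting
  images of t, t' in T force t and t' to commute, and T generates G.
\<close>

lemma (in group) cauchy_nontrivial_pow_prime_eq_one:
  assumes fin: "finite (carrier G)" and p: "Factorial_Ring.prime (p::nat)" and dvd: "p dvd order G"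
  shows "\<exists>c\<in>carrier G. c \<noteq> \<one> \<and> c [^] p = \<one>"
proof -
  define a where "a = multiplicity p (order G)"
  have "p ^ a dvd order G" unfolding a_def by (rule multiplicity_dvd)
  then obtain m where om: "order G = p ^ a * m" by blast
  have "a \<ge> 1" unfolding a_def
    using dvd fin p multiplicity_gt_zero_iff[of "order G" p] prime_gt_1_nat[OF p]
    by (simp add: order_gt_0_iff_finite not_prime_unit Suc_le_eq)
  then have "p ^ a \<ge> 2"
    using prime_ge_2_nat[OF p] power_increasing[of 1 a p] by simp
  obtain P where P: "subgroup P G" "card P = p ^ a"
    using sylow_thm[OF p is_group om fin] by blast
  interpret P: subgroup P G by (rule P(1))
  have "P \<noteq> {\<one>}" using P(2) \<open>p ^ a \<ge> 2\<close> by auto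
  then obtain x where x: "x \<in> P" "x \<noteq> \<one>" using P.one_closed by blast
  have xG: "x \<in> carrier G" using x P.subset by blast
  have "x [^] (p ^ a) = \<one>"
    using group.pow_order_eq_1[OF P.subgroup_is_group[OF is_group]] x P(2)
    by (simp add: order_def flip: nat_pow_consistent)
  define b where "b = (LEAST b. x [^] (p ^ b) = \<one>)"
  have xb: "x [^] (p ^ b) = \<one>" unfolding b_def by (rule LeastI) fact
  have b0: "b \<noteq> 0"
  proof
    assume "b = 0"
    with xb xG x show False by simp
  qed
  have "x [^] (p ^ (b - 1)) \<noteq> \<one>"
  proof
    assume "x [^] (p ^ (b - 1)) = \<one>"
    then have "b \<le> b - 1" unfolding b_def by (rule Least_le)
    with b0 show False by simp
  qed
  moreover have "(x [^] (p ^ (b - 1))) [^] p = \<one>"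
    using xb xG b0 by (simp add: nat_pow_pow power_Suc2[symmetric])
  ultimately show ?thesis using xG by (intro bexI[of _ "x [^] (p ^ (b - 1))"]) auto
qed

lemma (in group) subgroup_centralizer:
  assumes "A \<subseteq> carrier G"
  shows "subgroup {x \<in> carrier G. \<forall>a\<in>A. x \<otimes> a = a \<otimes> x} G"
proof (rule subgroupI)
  fix x y
  assume x: "x \<in> {x \<in> carrier G. \<forall>a\<in>A. x \<otimes> a = a \<otimes> x}"
    and y: "y \<in> {x \<in> carrier G. \<forall>a\<in>A. x \<otimes> a = a \<otimes> x}"
  show "inv x \<in> {x \<in> carrier G. \<forall>a\<in>A. x \<otimes> a = a \<otimes> x}"
    using x assms by (auto simp: inv_solve_left' m_assoc[symmetric] subsetD)
      (metis m_assoc r_inv r_one subsetD inv_closed)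
  show "x \<otimes> y \<in> {x \<in> carrier G. \<forall>a\<in>A. x \<otimes> a = a \<otimes> x}"
    using x y assms by (auto simp: m_assoc) (metis m_assoc subsetD)
qed (use assms in \<open>auto intro!: exI[of _ \<one>]\<close>)

lemma (in group) comm_group_if_generated_by_commuting:
  assumes A: "A \<subseteq> carrier G" and comm: "\<And>a b. a \<in> A \<Longrightarrow> b \<in> A \<Longrightarrow> a \<otimes> b = b \<otimes> a"
    and gen: "generate G A = carrier G"
  shows "comm_group G"
proof -
  have "generate G A \<subseteq> {x \<in> carrier G. \<forall>a\<in>A. x \<otimes> a = a \<otimes> x}"
    by (rule generate_subgroup_incl[OF _ subgroup_centralizer[OF A]]) (use A comm in auto)
  then have "generate G A \<subseteq> {x \<in> carrier G. \<forall>a\<in>carrier G. x \<otimes> a = a \<otimes> x}"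
    using A gen by (intro generate_subgroup_incl[OF _ subgroup_centralizer]) auto
  then show ?thesis using gen by (intro group_comm_groupI) auto
qed

locale prime_fpf_class_action = group Q for Q (structure) +
  fixes \<Omega> :: "'w set" and act :: "'a \<Rightarrow> 'w \<Rightarrow> 'w" and S :: "'a set" and \<omega> :: 'w and p :: nat
  assumes prime_p: "Factorial_Ring.prime p"
    and finite_carrier: "finite (carrier Q)"
    and card_\<Omega>: "card \<Omega> = p" and \<omega>_in_\<Omega>: "\<omega> \<in> \<Omega>"
    and act_closed: "x \<in> carrier Q \<Longrightarrow> w \<in> \<Omega> \<Longrightarrow> act x w \<in> \<Omega>"
    and act_mult: "x \<in> carrier Q \<Longrightarrow> y \<in> carrier Q \<Longrightarrow> w \<in> \<Omega> \<Longrightarrow> act (x \<otimes> y) w = act x (act y w)"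
    and act_one: "w \<in> \<Omega> \<Longrightarrow> act \<one> w = w"
    and faithful: "x \<in> carrier Q \<Longrightarrow> y \<in> carrier Q \<Longrightarrow> (\<And>w. w \<in> \<Omega> \<Longrightarrow> act x w = act y w) \<Longrightarrow> x = y"
    and S_subset: "S \<subseteq> carrier Q" and one_in_S: "\<one> \<in> S" and card_S: "card S = p"
    and inj_on_S_\<omega>: "inj_on (\<lambda>s. act s \<omega>) S"
    and S_fixed_point_free: "s \<in> S \<Longrightarrow> s \<noteq> \<one> \<Longrightarrow> w \<in> \<Omega> \<Longrightarrow> act s w \<noteq> w"
    and S_conj_closed: "s \<in> S \<Longrightarrow> x \<in> carrier Q \<Longrightarrow> inv x \<otimes> s \<otimes> x \<in> S"
begin

lemma finite_\<Omega>: "finite \<Omega>"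
  using card_\<Omega> prime_gt_0_nat[OF prime_p] card_gt_0_iff by metis

lemma finite_S: "finite S"
  using card_S prime_gt_0_nat[OF prime_p] card_gt_0_iff by metis

lemma card_S_minus_one: "card (S - {\<one>}) = p - 1"
  using card_S one_in_S finite_S by simp

lemma S_carrier: "s \<in> S \<Longrightarrow> s \<in> carrier Q"
  using S_subset by auto

lemma act_inv_act: "x \<in> carrier Q \<Longrightarrow> w \<in> \<Omega> \<Longrightarrow> act (inv x) (act x w) = w"
  by (metis act_mult act_one inv_closed l_inv)

lemma act_act_inv: "x \<in> carrier Q \<Longrightarrow> w \<in> \<Omega> \<Longrightarrow> act x (act (inv x) w) = w"
  by (metis act_mult act_one inv_closed r_inv)

lemma act_cancel: "x \<in> carrier Q \<Longrightarrow> w \<in> \<Omega> \<Longrightarrow> w' \<in> \<Omega> \<Longrightarrow> act x w = act x w' \<Longrightarrow> w = w'"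
  by (metis act_inv_act)

lemma act_S_\<omega>_eq: "(\<lambda>s. act s \<omega>) ` S = \<Omega>"
proof (rule card_subset_eq[OF finite_\<Omega>])
  show "(\<lambda>s. act s \<omega>) ` S \<subseteq> \<Omega>" using S_subset act_closed \<omega>_in_\<Omega> by blast
  show "card ((\<lambda>s. act s \<omega>) ` S) = card \<Omega>" using card_image[OF inj_on_S_\<omega>] card_S card_\<Omega> by simp
qed

lemma obtain_S_\<omega>:
  assumes "w \<in> \<Omega>" obtains s where "s \<in> S" "act s \<omega> = w"
  using act_S_\<omega>_eq assms by (metis imageE)

definition stab :: "'w \<Rightarrow> 'a set" where
  "stab w = {x \<in> carrier Q. act x w = w}"

lemma one_in_stab: "w \<in> \<Omega> \<Longrightarrow> \<one> \<in> stab w"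
  unfolding stab_def using act_one by simp

lemma finite_stab: "finite (stab w)"
  using finite_carrier unfolding stab_def by simp

lemma card_stab_pos: "card (stab \<omega>) \<ge> 1"
  using finite_stab one_in_stab[OF \<omega>_in_\<Omega>] by (metis One_nat_def Suc_leI card_gt_0_iff empty_iff)

text \<open>S is a left transversal of the stabilizer of \<open>\<omega>\<close>.\<close>

lemma order_eq_p_mult_card_stab: "order Q = p * card (stab \<omega>)"
proof -
  have inj: "inj_on (\<lambda>(s, k). s \<otimes> k) (S \<times> stab \<omega>)"
  proof (rule inj_onI, clarify)
    fix s k s' k'
    assume a: "s \<in> S" "k \<in> stab \<omega>" "s' \<in> S" "k' \<in> stab \<omega>" "s \<otimes> k = s' \<otimes> k'"
    have c: "s \<in> carrier Q" "s' \<in> carrier Q" "k \<in> carrier Q" "k' \<in> carrier Q"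
      using a S_subset stab_def by auto
    have "act s \<omega> = act (s \<otimes> k) \<omega>" using a(2) c act_mult \<omega>_in_\<Omega> stab_def by simp
    also have "\<dots> = act s' \<omega>" using a(4,5) c act_mult \<omega>_in_\<Omega> stab_def by simp
    finally have "s = s'" using inj_on_S_\<omega> a inj_onD by fastforce
    then show "s = s' \<and> k = k'" using a(5) c by simp
  qed
  have "(\<lambda>(s, k). s \<otimes> k) ` (S \<times> stab \<omega>) = carrier Q"
  proof
    show "(\<lambda>(s, k). s \<otimes> k) ` (S \<times> stab \<omega>) \<subseteq> carrier Q" using S_subset stab_def by auto
    show "carrier Q \<subseteq> (\<lambda>(s, k). s \<otimes> k) ` (S \<times> stab \<omega>)"
    proof
      fix x assume x: "x \<in> carrier Q"
      obtain s where s: "s \<in> S" "act s \<omega> = act x \<omega>"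
        using obtain_S_\<omega> act_closed[OF x \<omega>_in_\<Omega>] by metis
      have sc: "s \<in> carrier Q" using s S_carrier by auto
      have "act (inv s \<otimes> x) \<omega> = \<omega>" using s(2)[symmetric] sc x \<omega>_in_\<Omega> act_mult act_inv_act by simp
      then have "inv s \<otimes> x \<in> stab \<omega>" unfolding stab_def using sc x by simp
      moreover have "x = s \<otimes> (inv s \<otimes> x)" using sc x by (simp add: m_assoc[symmetric])
      ultimately show "x \<in> (\<lambda>(s, k). s \<otimes> k) ` (S \<times> stab \<omega>)" using s by force
    qed
  qed
  then have "order Q = card (S \<times> stab \<omega>)" using card_image[OF inj] by (simp add: order_def)
  also have "\<dots> = p * card (stab \<omega>)" using card_S by (simp add: card_cartesian_product)
  finally show ?thesis .
qed

lemma act_pow_fixed: "x \<in> carrier Q \<Longrightarrow> w \<in> \<Omega> \<Longrightarrow> act x w = w \<Longrightarrow> act (x [^] (n::nat)) w = w"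
  by (induction n) (simp_all add: act_one act_mult)

lemma fixed_if_pow_fixed:
  assumes c: "c \<in> carrier Q" "c [^] p = \<one>" and d: "0 < d" "d < p" and w: "w \<in> \<Omega>"
    and fixed: "act (c [^] d) w = w"
  shows "act c w = w"
proof -
  have "coprime d p"
    using d prime_p by (metis coprime_commute not_less prime_imp_coprime_nat dvd_imp_le)
  then obtain m y where my: "d * m = p * y + 1" using bezout_nat[of d p] d by auto
  have "(c [^] d) [^] m = c [^] (p * y) \<otimes> c" using c by (simp add: nat_pow_pow my)
  also have "c [^] (p * y) = \<one>" using c by (simp add: nat_pow_pow[symmetric])
  finally have "(c [^] d) [^] m = c" using c by simp
  then show ?thesis using act_pow_fixed[of "c [^] d" w m] c w fixed by simp
qed

lemma inj_on_pow_orbit: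
  assumes c: "c \<in> carrier Q" "c [^] p = \<one>" and w: "w \<in> \<Omega>" and moved: "act c w \<noteq> w"
  shows "inj_on (\<lambda>i. act (c [^] i) w) {..<p}"
proof -
  have "i = j" if ij: "i \<le> j" "j < p" "act (c [^] i) w = act (c [^] j) w" for i j
  proof (rule ccontr)
    assume "i \<noteq> j"
    then have lt: "0 < j - i" "j - i < p" using ij by auto
    have "c [^] j = c [^] i \<otimes> c [^] (j - i)" using c ij(1) by (simp add: nat_pow_mult)
    then have "act (c [^] i) w = act (c [^] i) (act (c [^] (j - i)) w)" using ij(3) c w act_mult by simp
    then have "act (c [^] (j - i)) w = w" using act_cancel c w act_closed by (metis nat_pow_closed)
    then show False using fixed_if_pow_fixed[OF c lt w] moved by simp
  qed
  then show ?thesis by (intro inj_onI) (metis lessThan_iff nat_le_linear)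
qed

lemma pow_orbit_eq:
  assumes c: "c \<in> carrier Q" "c [^] p = \<one>" and w: "w \<in> \<Omega>" and moved: "act c w \<noteq> w"
  shows "(\<lambda>i. act (c [^] i) w) ` {..<p} = \<Omega>"
proof (rule card_subset_eq[OF finite_\<Omega>])
  show "(\<lambda>i. act (c [^] i) w) ` {..<p} \<subseteq> \<Omega>" using c w act_closed by auto
  show "card ((\<lambda>i. act (c [^] i) w) ` {..<p}) = card \<Omega>"
    using card_image[OF inj_on_pow_orbit[OF assms]] card_\<Omega> by simp
qed

lemma order_p_fixed_point_free:
  assumes c: "c \<in> carrier Q" "c [^] p = \<one>" "c \<noteq> \<one>" and w: "w \<in> \<Omega>"
  shows "act c w \<noteq> w"
proof
  assume fixed: "act c w = w"
  obtain w' where w': "w' \<in> \<Omega>" "act c w' \<noteq> w'"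
    using faithful[OF c(1) one_closed] c(3) act_one by metis
  obtain k where k: "k < p" "act (c [^] k) w' = w" using pow_orbit_eq[OF c(1,2) w'] w by auto
  have "c [^] (p - k) \<otimes> c [^] k = \<one>" using c k by (simp add: nat_pow_mult)
  then have "act (c [^] (p - k)) w = w'" using k c w' act_mult act_one by (metis nat_pow_closed)
  moreover have "act (c [^] (p - k)) w = w" using act_pow_fixed[OF c(1) w fixed] .
  ultimately show False using w' fixed by simp
qed

lemma pow_order_p_fixed_point_free:
  assumes c: "c \<in> carrier Q" "c [^] p = \<one>" "c \<noteq> \<one>" and d: "0 < d" "d < p" and w: "w \<in> \<Omega>"
  shows "act (c [^] d) w \<noteq> w"
  using fixed_if_pow_fixed[OF c(1,2) d w] order_p_fixed_point_free[OF c w] by blast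

lemma commuting_with_order_p_is_pow:
  assumes c: "c \<in> carrier Q" "c [^] p = \<one>" "c \<noteq> \<one>" and y: "y \<in> carrier Q"
    and comm: "y \<otimes> c = c \<otimes> y"
  shows "\<exists>j<p. y = c [^] j"
proof -
  have orbit: "(\<lambda>i. act (c [^] i) \<omega>) ` {..<p} = \<Omega>"
    using pow_orbit_eq[OF c(1,2) \<omega>_in_\<Omega> order_p_fixed_point_free[OF c \<omega>_in_\<Omega>]] .
  moreover have "act y \<omega> \<in> \<Omega>" using act_closed[OF y \<omega>_in_\<Omega>] .
  ultimately obtain j where j: "j < p" "act y \<omega> = act (c [^] j) \<omega>" by auto
  have "y = c [^] j"
  proof (rule faithful[OF y])
    show "c [^] j \<in> carrier Q" using c by simp
    fix w assume "w \<in> \<Omega>"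
    then obtain i :: nat where i: "w = act (c [^] i) \<omega>" using orbit by auto
    have "c [^] i \<otimes> y = y \<otimes> c [^] i" using group_commutes_pow[OF comm[symmetric] c(1) y] .
    then have "act y w = act (c [^] i) (act (c [^] j) \<omega>)"
      using i j c y \<omega>_in_\<Omega> by (metis act_mult nat_pow_closed)
    also have "\<dots> = act (c [^] j) w"
      using i c \<omega>_in_\<Omega> nat_pow_comm[of c i j] by (metis act_mult nat_pow_closed)
    finally show "act y w = act (c [^] j) w" .
  qed
  with j show ?thesis by blast
qed

lemma p_dvd_card_centralizer:
  assumes u: "u \<in> S" "u \<noteq> \<one>"
  shows "p dvd card {g \<in> carrier Q. g \<otimes> u = u \<otimes> g}"
proof -
  define C where "C = {g \<in> carrier Q. g \<otimes> u = u \<otimes> g}"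
  have uc: "u \<in> carrier Q" using u S_carrier by auto
  define \<phi> where "\<phi> = (\<lambda>g. \<lambda>h\<in>carrier Q. g \<otimes> h \<otimes> inv g)"
  interpret conjugation: group_action Q "carrier Q" \<phi>
    unfolding \<phi>_def by (rule action_by_conjugation)
  have "stabilizer Q \<phi> u = C"
    using uc by (auto simp: C_def stabilizer_def \<phi>_def inv_solve_right')
  then have orbit_stabilizer: "card (orbit Q \<phi> u) * card C = p * card (stab \<omega>)"
    using conjugation.orbit_stabilizer_theorem[OF uc] order_eq_p_mult_card_stab by simp
  have "orbit Q \<phi> u \<subseteq> S - {\<one>}"
  proof
    fix x assume "x \<in> orbit Q \<phi> u"
    then obtain g where g: "g \<in> carrier Q" "x = g \<otimes> u \<otimes> inv g"
      using uc unfolding orbit_def \<phi>_def by auto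
    have "x \<in> S" using S_conj_closed[OF u(1), of "inv g"] g by simp
    moreover have "x \<noteq> \<one>" using g uc u(2) by (auto simp: inv_solve_right')
    ultimately show "x \<in> S - {\<one>}" by simp
  qed
  then have orbit_le: "card (orbit Q \<phi> u) \<le> p - 1"
    using card_mono finite_S card_S_minus_one by (metis finite_Diff)
  show ?thesis
    unfolding C_def[symmetric]
  proof (rule ccontr)
    assume "\<not> p dvd card C"
    then have "coprime (card C) p" using prime_p by (simp add: prime_imp_coprime coprime_commute)
    moreover have "card C dvd p * card (stab \<omega>)"
      unfolding orbit_stabilizer[symmetric] by simp
    ultimately have "card C dvd card (stab \<omega>)" by (simp add: coprime_dvd_mult_right_iff)
    then have "card C \<le> card (stab \<omega>)" using card_stab_pos by (simp add: dvd_imp_le)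
    then have "p * card (stab \<omega>) \<le> (p - 1) * card (stab \<omega>)"
      unfolding orbit_stabilizer[symmetric] by (rule mult_le_mono[OF orbit_le])
    moreover have "(p - 1) * card (stab \<omega>) < p * card (stab \<omega>)"
      using card_stab_pos prime_gt_1_nat[OF prime_p] by (intro mult_strict_right_mono) auto
    ultimately show False by simp
  qed
qed

text \<open>The centralizer of u contains an element of order p, of which u is a power.\<close>

lemma S_pow_p_eq_one:
  assumes u: "u \<in> S"
  shows "u [^] p = \<one>"
proof (cases "u = \<one>")
  case False
  have uc: "u \<in> carrier Q" using u S_carrier by auto
  define Z where "Z = {g \<in> carrier Q. g \<otimes> u = u \<otimes> g}"
  have Z: "subgroup Z Q"
    using subgroup_centralizer[of "{u}"] uc unfolding Z_def by simp
  interpret Z: subgroup Z Q by (rule Z)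
  interpret Z_group: group "Q\<lparr>carrier := Z\<rparr>" by (rule Z.subgroup_is_group) (rule is_group)
  have "finite Z" using finite_carrier Z.subset finite_subset by blast
  moreover have "p dvd order (Q\<lparr>carrier := Z\<rparr>)"
    using p_dvd_card_centralizer[OF u False] unfolding order_def Z_def by simp
  ultimately obtain c where c: "c \<in> Z" "c \<noteq> \<one>" "c [^]\<^bsub>Q\<lparr>carrier := Z\<rparr>\<^esub> p = \<one>"
    using Z_group.cauchy_nontrivial_pow_prime_eq_one[OF _ prime_p] by auto
  have cc: "c \<in> carrier Q" using c Z.subset by auto
  have "c [^] p = \<one>" using c(3) by (simp flip: nat_pow_consistent)
  have "u \<otimes> c = c \<otimes> u" using c(1) unfolding Z_def by simp
  then obtain j :: nat where "u = c [^] j"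
    using commuting_with_order_p_is_pow[OF cc \<open>c [^] p = \<one>\<close> c(2) uc] by blast
  then have "u [^] p = (c [^] p) [^] j" using cc by (metis nat_pow_pow mult.commute)
  then show ?thesis using \<open>c [^] p = \<one>\<close> by simp
qed simp

text \<open>Conjugating the element of S that moves \<open>\<omega>\<close> to w by k gives an element of S with
  the same action on \<open>\<omega>\<close>, so k centralizes it and is one of its powers.\<close>

lemma stab_\<omega>_fixes_only_\<omega>:
  assumes k: "k \<in> stab \<omega>" and w: "w \<in> \<Omega>" "act k w = w" "w \<noteq> \<omega>"
  shows "k = \<one>"
proof -
  have kc: "k \<in> carrier Q" and k\<omega>: "act k \<omega> = \<omega>" using k unfolding stab_def by auto
  obtain u where u: "u \<in> S" "act u \<omega> = w" using obtain_S_\<omega>[OF w(1)] by blast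
  have uc: "u \<in> carrier Q" using u S_carrier by auto
  have u1: "u \<noteq> \<one>" using u w(3) act_one \<omega>_in_\<Omega> by auto
  have "act (inv k \<otimes> u \<otimes> k) \<omega> = act (inv k) (act u (act k \<omega>))"
    using kc uc \<omega>_in_\<Omega> by (simp add: act_mult act_closed)
  also have "\<dots> = act u \<omega>" using k\<omega> u(2) act_inv_act[OF kc w(1)] w(2) by simp
  finally have "inv k \<otimes> u \<otimes> k = u"
    using inj_on_S_\<omega> S_conj_closed[OF u(1) kc] u(1) by (auto dest: inj_onD)
  then have "k \<otimes> u = u \<otimes> k" using kc uc by (simp add: m_assoc inv_solve_left')
  then obtain j where j: "j < p" "k = u [^] j"
    using commuting_with_order_p_is_pow[OF uc S_pow_p_eq_one[OF u(1)] u1 kc] by blast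
  show "k = \<one>"
  proof (rule ccontr)
    assume "k \<noteq> \<one>"
    then have "0 < j" using j by (auto intro: gr0I)
    then show False
      using pow_order_p_fixed_point_free[OF uc S_pow_p_eq_one[OF u(1)] u1 _ j(1) \<omega>_in_\<Omega>] j k\<omega> by simp
  qed
qed

lemma fixed_point_unique:
  assumes x: "x \<in> carrier Q" "x \<noteq> \<one>" and w: "w \<in> \<Omega>" "w' \<in> \<Omega>" "act x w = w" "act x w' = w'"
  shows "w = w'"
proof -
  obtain s where s: "s \<in> S" "act s \<omega> = w" using obtain_S_\<omega>[OF w(1)] by blast
  have sc: "s \<in> carrier Q" using s S_carrier by auto
  define k where "k = inv s \<otimes> x \<otimes> s"
  have "act k \<omega> = act (inv s) (act x (act s \<omega>))"
    unfolding k_def using sc x \<omega>_in_\<Omega> by (simp add: act_mult act_closed)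
  also have "\<dots> = \<omega>" using s(2) w(3) act_inv_act[OF sc \<omega>_in_\<Omega>] by simp
  finally have k: "k \<in> stab \<omega>" unfolding stab_def k_def using sc x by simp
  have "k \<noteq> \<one>" unfolding k_def using sc x by (simp add: m_assoc inv_solve_left')
  moreover have "act k (act (inv s) w') = act (inv s) w'"
    unfolding k_def using sc x w act_act_inv by (simp add: act_mult act_closed)
  ultimately have "act (inv s) w' = \<omega>"
    using stab_\<omega>_fixes_only_\<omega>[OF k] act_closed sc w(2) by blast
  then show ?thesis using act_act_inv[OF sc w(2)] s(2) by simp
qed

lemma card_stab_\<omega>_le_card_stab:
  assumes w: "w \<in> \<Omega>"
  shows "card (stab \<omega>) \<le> card (stab w)"
proof -
  obtain s where s: "s \<in> S" "act s \<omega> = w" using obtain_S_\<omega>[OF w] by blast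
  have sc: "s \<in> carrier Q" using s S_carrier by auto
  have "inj_on (\<lambda>k. s \<otimes> k \<otimes> inv s) (stab \<omega>)"
    by (rule inj_onI) (use sc in \<open>auto simp: stab_def\<close>)
  moreover have "(\<lambda>k. s \<otimes> k \<otimes> inv s) ` stab \<omega> \<subseteq> stab w"
  proof
    fix y assume "y \<in> (\<lambda>k. s \<otimes> k \<otimes> inv s) ` stab \<omega>"
    then obtain k where k: "k \<in> carrier Q" "act k \<omega> = \<omega>" "y = s \<otimes> k \<otimes> inv s"
      unfolding stab_def by blast
    have "act (inv s) w = \<omega>" using act_inv_act[OF sc \<omega>_in_\<Omega>] s(2) by simp
    then have "act y w = w" using k sc w s(2) \<omega>_in_\<Omega> by (simp add: act_mult act_closed)
    then show "y \<in> stab w" unfolding stab_def using k sc by simp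
  qed
  ultimately show ?thesis by (rule card_inj_on_le[OF _ _ finite_stab])
qed

definition derangements :: "'a set" where
  "derangements = {x \<in> carrier Q. \<forall>w\<in>\<Omega>. act x w \<noteq> w}"

lemma card_nontrivial_stab_ge: "p * (card (stab \<omega>) - 1) \<le> card (\<Union>w\<in>\<Omega>. stab w - {\<one>})"
proof -
  have "p * (card (stab \<omega>) - 1) = (\<Sum>w\<in>\<Omega>. card (stab \<omega>) - 1)" using card_\<Omega> by simp
  also have "\<dots> \<le> (\<Sum>w\<in>\<Omega>. card (stab w - {\<one>}))"
    using card_stab_\<omega>_le_card_stab one_in_stab finite_stab by (intro sum_mono) fastforce
  also have "\<dots> = card (\<Union>w\<in>\<Omega>. stab w - {\<one>})"
    using fixed_point_unique finite_stab finite_\<Omega>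
    by (intro card_UN_disjoint[symmetric]) (auto simp: stab_def)
  finally show ?thesis .
qed

lemma card_derangements_le: "card derangements \<le> p - 1"
proof -
  let ?U = "\<Union>w\<in>\<Omega>. stab w - {\<one>}"
  have D: "derangements \<subseteq> carrier Q" unfolding derangements_def by auto
  have "insert \<one> ?U \<subseteq> carrier Q - derangements"
    using \<omega>_in_\<Omega> act_one by (auto simp: derangements_def stab_def)
  then have "card (insert \<one> ?U) \<le> card (carrier Q - derangements)"
    using finite_carrier by (intro card_mono) auto
  moreover have "card (insert \<one> ?U) = Suc (card ?U)"
    using finite_\<Omega> finite_stab by (intro card_insert_disjoint) auto
  moreover have "card (carrier Q - derangements) = p * card (stab \<omega>) - card derangements"
    using card_Diff_subset[OF finite_subset[OF D finite_carrier] D] order_eq_p_mult_card_stab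
    by (simp add: order_def)
  moreover have "p * (card (stab \<omega>) - 1) = p * card (stab \<omega>) - p"
    by (simp add: right_diff_distrib')
  moreover have "p \<le> p * card (stab \<omega>)" using card_stab_pos by simp
  ultimately show ?thesis using card_nontrivial_stab_ge by linarith
qed

lemma S_minus_one_eq_pows:
  assumes u: "u \<in> S" "u \<noteq> \<one>"
  shows "S - {\<one>} = (\<lambda>j. u [^] j) ` {1..<p}"
proof -
  have uc: "u \<in> carrier Q" and up: "u [^] p = \<one>" using u S_carrier S_pow_p_eq_one by auto
  have finite: "finite derangements" using finite_carrier unfolding derangements_def by simp
  have "S - {\<one>} \<subseteq> derangements" unfolding derangements_def using S_fixed_point_free S_carrier by auto
  then have S_eq: "S - {\<one>} = derangements"
    using card_seteq[OF finite] card_derangements_le card_S_minus_one by simp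
  have "(\<lambda>j. u [^] j) ` {1..<p} \<subseteq> derangements"
    unfolding derangements_def using pow_order_p_fixed_point_free[OF uc up u(2)] uc by auto
  moreover have "inj_on (\<lambda>j. u [^] j) {1..<p}"
  proof (rule inj_onI)
    fix i j :: nat assume "i \<in> {1..<p}" "j \<in> {1..<p}" "u [^] i = u [^] j"
    then show "i = j"
      using inj_onD[OF inj_on_pow_orbit[OF uc up \<omega>_in_\<Omega> S_fixed_point_free[OF u \<omega>_in_\<Omega>]]] by auto
  qed
  then have "card ((\<lambda>j. u [^] j) ` {1..<p}) = p - 1" by (simp add: card_image)
  ultimately have "(\<lambda>j. u [^] j) ` {1..<p} = derangements"
    using card_seteq[OF finite] card_derangements_le by simp
  with S_eq show ?thesis by simp
qed

lemma S_commute: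
  assumes "u \<in> S" "v \<in> S"
  shows "u \<otimes> v = v \<otimes> u"
proof (cases "u = \<one> \<or> v = \<one>")
  case False
  then obtain j :: nat where "v = u [^] j" using S_minus_one_eq_pows[of u] assms by blast
  then show ?thesis using assms S_carrier by (simp add: nat_pow_Suc2[symmetric])
qed (use assms S_carrier in auto)

end

lemma right_transversal_unique:
  assumes "right_transversal G K T" "C \<in> rcosets\<^bsub>G\<^esub> K" "t \<in> C \<inter> T" "t' \<in> C \<inter> T"
  shows "t = t'"
  using assms unfolding right_transversal_def by (metis card_1_singletonE singletonD)

lemma right_transversal_meets:
  assumes "right_transversal G K T" "C \<in> rcosets\<^bsub>G\<^esub> K"
  obtains t where "t \<in> C" "t \<in> T"
  using assms unfolding right_transversal_def by (metis card_1_singletonE Int_iff insertI1)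

locale rcc_prime_folder = group G for G (structure) +
  fixes H T :: "'a set" and p :: nat
  assumes prime_p: "Factorial_Ring.prime p" and finite_carrier: "finite (carrier G)"
    and subgroup_H: "subgroup H G" and T_subset: "T \<subseteq> carrier G" and one_in_T: "\<one> \<in> T"
    and transversal: "g \<in> carrier G \<Longrightarrow> right_transversal G (conj_set G H g) T"
    and T_conj_closed: "g \<in> carrier G \<Longrightarrow> t \<in> T \<Longrightarrow> inv g \<otimes> t \<otimes> g \<in> T"
    and card_T: "card T = p"
begin

lemma H_subset: "H \<subseteq> carrier G"
  using subgroup_H subgroup.subset by blast

lemma T_carrier: "t \<in> T \<Longrightarrow> t \<in> carrier G"
  using T_subset by auto

lemma transversal_H: "right_transversal G H T"
proof -
  have "conj_set G H \<one> = H" unfolding conj_set_def using H_subset by (force simp: image_iff)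
  then show ?thesis using transversal[OF one_closed] by simp
qed

lemma T_rcoset_inj: "t \<in> T \<Longrightarrow> t' \<in> T \<Longrightarrow> H #> t = H #> t' \<Longrightarrow> t = t'"
  using right_transversal_unique[OF transversal_H rcosetsI[OF H_subset T_carrier]]
    rcos_self[OF T_carrier subgroup_H] by (metis IntI)

lemma rcosets_mult_closed: "w \<in> rcosets H \<Longrightarrow> g \<in> carrier G \<Longrightarrow> w #> g \<in> rcosets H"
  using H_subset by (auto simp: RCOSETS_def coset_mult_assoc)

lemma rcosets_assoc: "w \<in> rcosets H \<Longrightarrow> a \<in> carrier G \<Longrightarrow> b \<in> carrier G \<Longrightarrow> w #> a #> b = w #> (a \<otimes> b)"
  using subgroup.rcosets_carrier[OF subgroup_H] coset_mult_assoc by blast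

lemma rcosets_one: "w \<in> rcosets H \<Longrightarrow> w #> \<one> = w"
  using subgroup.rcosets_carrier[OF subgroup_H] coset_mult_one by blast

lemma card_rcosets: "card (rcosets H) = p"
proof -
  have "bij_betw (\<lambda>t. H #> t) T (rcosets H)"
  proof (rule bij_betwI')
    show "\<And>t t'. t \<in> T \<Longrightarrow> t' \<in> T \<Longrightarrow> (H #> t = H #> t') = (t = t')" using T_rcoset_inj by blast
    show "\<And>t. t \<in> T \<Longrightarrow> H #> t \<in> rcosets H" using T_carrier rcosetsI[OF H_subset] by auto
    fix C assume C: "C \<in> rcosets H"
    then obtain t where t: "t \<in> C" "t \<in> T" using right_transversal_meets[OF transversal_H] by blast
    obtain x where "x \<in> carrier G" "C = H #> x" using C unfolding RCOSETS_def by blast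
    then have "C = H #> t" using t repr_independence[of t H x] subgroup_H by simp
    then show "\<exists>t\<in>T. C = H #> t" using t by blast
  qed
  then show ?thesis using card_T bij_betw_same_card by fastforce
qed

lemma T_fixed_point_free:
  assumes t: "t \<in> T" "t \<noteq> \<one>" and w: "w \<in> rcosets H"
  shows "w #> t \<noteq> w"
proof
  assume fixed: "w #> t = w"
  obtain x where x: "x \<in> carrier G" "w = H #> x" using w unfolding RCOSETS_def by blast
  have tc: "t \<in> carrier G" using t T_carrier by auto
  have "x \<otimes> t \<in> H #> x"
    using fixed x tc rcos_self[of "x \<otimes> t" H] subgroup_H H_subset by (simp add: coset_mult_assoc)
  then have "x \<otimes> t \<otimes> inv x \<in> H" using subgroup.rcos_module_imp[OF subgroup_H is_group x(1)] by simp
  moreover have "t = inv x \<otimes> (x \<otimes> t \<otimes> inv x) \<otimes> x"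
    using x tc by (simp add: m_assoc) (simp add: m_assoc[symmetric])
  ultimately have "t \<in> conj_set G H x" unfolding conj_set_def by blast
  moreover have "\<one> \<in> conj_set G H x"
    unfolding conj_set_def using x subgroup.one_closed[OF subgroup_H] by (force simp: image_iff)
  moreover have "conj_set G H x \<in> rcosets (conj_set G H x)"
    using rcosetsI[OF _ one_closed, of "conj_set G H x"] coset_mult_one x H_subset
    unfolding conj_set_def by auto
  ultimately show False using right_transversal_unique[OF transversal[OF x(1)]] t one_in_T by blast
qed

definition \<rho> :: "'a \<Rightarrow> 'a set \<Rightarrow> 'a set" where
  "\<rho> g = (\<lambda>w\<in>rcosets H. w #> g)"

lemma \<rho>_Bij: "g \<in> carrier G \<Longrightarrow> \<rho> g \<in> Bij (rcosets H)"
  unfolding Bij_def \<rho>_def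
  by (auto intro!: bij_betw_byWitness[where f' = "\<lambda>w. w #> inv g"]
      simp: rcosets_assoc rcosets_one rcosets_mult_closed)

lemma \<rho>_mult: "a \<in> carrier G \<Longrightarrow> b \<in> carrier G \<Longrightarrow> \<rho> a \<otimes>\<^bsub>BijGroup (rcosets H)\<^esub> \<rho> b = \<rho> (b \<otimes> a)"
  using \<rho>_Bij
  by (auto simp: BijGroup_def compose_def \<rho>_def rcosets_mult_closed rcosets_assoc intro!: restrict_ext)

lemma \<rho>_one: "\<rho> \<one> = \<one>\<^bsub>BijGroup (rcosets H)\<^esub>"
  by (auto simp: BijGroup_def \<rho>_def rcosets_one intro!: restrict_ext)

lemma \<rho>_inv: "a \<in> carrier G \<Longrightarrow> inv\<^bsub>BijGroup (rcosets H)\<^esub> (\<rho> a) = \<rho> (inv a)"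
  by (rule group.inv_equality[OF group_BijGroup])
     (auto simp: \<rho>_mult \<rho>_one \<rho>_Bij BijGroup_def[of "rcosets H", THEN arg_cong[where f=carrier], simplified])

lemma subgroup_image_\<rho>: "subgroup (\<rho> ` carrier G) (BijGroup (rcosets H))"
proof (rule group.subgroupI[OF group_BijGroup])
  show "\<rho> ` carrier G \<subseteq> carrier (BijGroup (rcosets H))" using \<rho>_Bij by (auto simp: BijGroup_def)
  show "\<And>a. a \<in> \<rho> ` carrier G \<Longrightarrow> inv\<^bsub>BijGroup (rcosets H)\<^esub> a \<in> \<rho> ` carrier G"
    using \<rho>_inv by auto
  show "\<And>a b. a \<in> \<rho> ` carrier G \<Longrightarrow> b \<in> \<rho> ` carrier G \<Longrightarrow>
      a \<otimes>\<^bsub>BijGroup (rcosets H)\<^esub> b \<in> \<rho> ` carrier G"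
    using \<rho>_mult by auto
qed auto

definition Q :: "('a set \<Rightarrow> 'a set) monoid" where
  "Q = (BijGroup (rcosets H))\<lparr>carrier := \<rho> ` carrier G\<rparr>"

lemma Q_inv: "x \<in> \<rho> ` carrier G \<Longrightarrow> inv\<^bsub>Q\<^esub> x = inv\<^bsub>BijGroup (rcosets H)\<^esub> x"
  unfolding Q_def by (rule group.m_inv_consistent[OF group_BijGroup subgroup_image_\<rho>])

lemma \<rho>_inj_on_T: "t \<in> T \<Longrightarrow> t' \<in> T \<Longrightarrow> \<rho> t H = \<rho> t' H \<Longrightarrow> t = t'"
  using T_rcoset_inj subgroup.subgroup_in_rcosets[OF subgroup_H is_group] by (simp add: \<rho>_def)

lemma prime_fpf_class_action_Q: "prime_fpf_class_action Q (rcosets H) (\<lambda>f w. f w) (\<rho> ` T) H p"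
proof (intro prime_fpf_class_action.intro prime_fpf_class_action_axioms.intro)
  show "group Q" unfolding Q_def by (rule subgroup.subgroup_is_group[OF subgroup_image_\<rho> group_BijGroup])
  show "finite (carrier Q)" using finite_carrier by (simp add: Q_def)
  show "H \<in> rcosets H" using subgroup.subgroup_in_rcosets[OF subgroup_H is_group] .
  show "\<rho> ` T \<subseteq> carrier Q" using T_subset by (auto simp: Q_def)
  show "\<one>\<^bsub>Q\<^esub> \<in> \<rho> ` T" using imageI[OF one_in_T, of \<rho>] by (simp add: Q_def \<rho>_one)
  show "card (\<rho> ` T) = p" using \<rho>_inj_on_T card_T by (metis card_image inj_onI)
  show "inj_on (\<lambda>s. s H) (\<rho> ` T)" by (rule inj_onI) (use \<rho>_inj_on_T in auto)
next
  fix x w assume "x \<in> carrier Q" "w \<in> rcosets H"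
  then show "x w \<in> rcosets H" by (auto simp: Q_def \<rho>_def rcosets_mult_closed)
next
  fix x y w assume "x \<in> carrier Q" "y \<in> carrier Q" "w \<in> rcosets H"
  then show "(x \<otimes>\<^bsub>Q\<^esub> y) w = x (y w)"
    using \<rho>_Bij by (auto simp: Q_def BijGroup_def compose_def)
next
  fix w assume "w \<in> rcosets H"
  then show "\<one>\<^bsub>Q\<^esub> w = w" by (simp add: Q_def BijGroup_def)
next
  fix x y assume "x \<in> carrier Q" "y \<in> carrier Q" "\<And>w. w \<in> rcosets H \<Longrightarrow> x w = y w"
  then show "x = y" using \<rho>_Bij by (auto simp: Q_def Bij_def intro: extensionalityI)
next
  fix s w assume s: "s \<in> \<rho> ` T" "s \<noteq> \<one>\<^bsub>Q\<^esub>" and w: "w \<in> rcosets H"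
  then obtain t where t: "t \<in> T" "s = \<rho> t" by blast
  then have "t \<noteq> \<one>" using s \<rho>_one by (auto simp: Q_def)
  then show "s w \<noteq> w" using T_fixed_point_free t w by (simp add: \<rho>_def)
next
  fix s x assume s: "s \<in> \<rho> ` T" and x: "x \<in> carrier Q"
  then obtain t g where t: "t \<in> T" "s = \<rho> t" and g: "g \<in> carrier G" "x = \<rho> g"
    by (auto simp: Q_def)
  have "inv\<^bsub>Q\<^esub> x \<otimes>\<^bsub>Q\<^esub> s \<otimes>\<^bsub>Q\<^esub> x = \<rho> (g \<otimes> (t \<otimes> inv g))"
    using g t T_carrier by (simp add: Q_inv \<rho>_inv \<rho>_mult) (simp add: Q_def \<rho>_mult)
  also have "g \<otimes> (t \<otimes> inv g) = inv (inv g) \<otimes> t \<otimes> inv g" using g t T_carrier by (simp add: m_assoc)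
  finally show "inv\<^bsub>Q\<^esub> x \<otimes>\<^bsub>Q\<^esub> s \<otimes>\<^bsub>Q\<^esub> x \<in> \<rho> ` T"
    using T_conj_closed[of "inv g" t] g t by auto
qed (fact prime_p card_rcosets)+

lemma T_commute:
  assumes t: "t \<in> T" "t' \<in> T"
  shows "t \<otimes> t' = t' \<otimes> t"
proof -
  interpret Q: prime_fpf_class_action Q "rcosets H" "\<lambda>f w. f w" "\<rho> ` T" H p
    by (rule prime_fpf_class_action_Q)
  have tc: "t \<in> carrier G" "t' \<in> carrier G" using t T_carrier by auto
  have "\<rho> t \<otimes>\<^bsub>Q\<^esub> \<rho> t' = \<rho> t' \<otimes>\<^bsub>Q\<^esub> \<rho> t" using Q.S_commute t by auto
  then have "\<rho> (t' \<otimes> t) (H #> inv t) = \<rho> (t \<otimes> t') (H #> inv t)"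
    using tc by (simp add: Q_def \<rho>_mult)
  then have "H #> (inv t \<otimes> t' \<otimes> t) = H #> t'"
    using tc subgroup.subgroup_in_rcosets[OF subgroup_H is_group]
    by (simp add: \<rho>_def rcosets_mult_closed rcosets_assoc m_assoc[symmetric])
  then have "inv t \<otimes> t' \<otimes> t = t'" using T_rcoset_inj T_conj_closed[OF tc(1) t(2)] t(2) by blast
  then show ?thesis using tc by (simp add: m_assoc inv_solve_left')
qed

end

theorem proposition4p3:
  fixes G :: "('a, 'b) monoid_scheme" and H T :: "'a set" and p :: nat
  assumes "Factorial_Ring.prime p"
    and "RCC_loop_folder G H T"
    and "card T = p"
    and "generate G T = carrier G"
  shows "comm_group G"
proof -
  interpret rcc_prime_folder G H T p
    using assms unfolding RCC_loop_folder_def loop_folder_def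
    by (intro rcc_prime_folder.intro rcc_prime_folder_axioms.intro) auto
  show ?thesis
    using comm_group_if_generated_by_commuting[OF T_subset T_commute assms(4)] .
qed

end
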